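(* Assume the cost $c$ is outcome monotonic, and let $\tau_0=1/2$ be the optimal non-strategic threshold. For any threshold $\tau\in[0,1]$, if $\mathcal U(\tau)>\mathcal U(\tau_0)$ then $\mathcal B(\tau)>\mathcal B(\tau_0)$.
   Context: Setting: features $x\in\mathcal X$, labels $y\in\{0,1\}$, joint distribution of $(X,Y)$; outcome likelihood $\ell(x)=\Pr[Y=1\mid X=x]>0$ for all $x$. Outcome monotonic cost $c:\mathcal X\times\mathcal X\to\mathbb R_{\ge0}$: for all $x,x',x^*$, (i) $c(x,x')>0$ iff $\ell(x')>\ell(x)$; (ii) $c(x,x^* )>c(x',x^* )>0$ iff $\ell(x^* )>\ell(x')>\ell(x)$; (iii) $c(x,x^* )>c(x,x')>0$ iff $\ell(x^* )>\ell(x')>\ell(x)$. Given a classifier $f$, individual utility $u_x(f,x')=f(x')-c(x,x')$; best response $\Delta(x)$: equals $x$ if $f(x)=1$ or no maximizer $x'$ of $u_x(f,\cdot)$ has $f(x')=1$, otherwise an arbitrary maximizer $x'$ with $f(x')=1$. Institutional utility $\mathcal U(f)=\Pr[f(\Delta(X))=Y]$; social burden $\mathcal B(f)=\mathbb E[\min_{x':f(x')=1}c(X,x')\mid Y=1]$. Threshold classifier $f_\tau(x)=\mathbf 1[\ell(x)\ge\tau]$; $\mathcal U(\tau)=\mathcal U(f_\tau)$, $\mathcal B(\tau)=\mathcal B(f_\tau)$. All minima/maxima appearing are assumed attained. *)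

theory Defs
  imports "HOL-Probability.Probability"
begin

text \<open>The joint distribution of (X,Y) is given by the
marginal law mu of X together with the outcome likelihood l(x) = Pr[Y=1 | X=x].
Classifiers are boolean-valued (True = label 1).\<close>

definition outcome_monotonic :: "('x \<Rightarrow> real) \<Rightarrow> ('x \<Rightarrow> 'x \<Rightarrow> real) \<Rightarrow> bool" where
  "outcome_monotonic l c \<longleftrightarrow>
     (\<forall>x x'. c x x' > 0 \<longleftrightarrow> l x' > l x) \<and>
     (\<forall>x x' xs. (c x xs > c x' xs \<and> c x' xs > 0) \<longleftrightarrow> (l xs > l x' \<and> l x' > l x)) \<and>
     (\<forall>x x' xs. (c x xs > c x x' \<and> c x x' > 0) \<longleftrightarrow> (l xs > l x' \<and> l x' > l x))"

definition indiv_utility :: "('x \<Rightarrow> bool) \<Rightarrow> ('x \<Rightarrow> 'x \<Rightarrow> real) \<Rightarrow> 'x \<Rightarrow> 'x \<Rightarrow> real" where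
  "indiv_utility f c x x' = (if f x' then 1 else 0) - c x x'"

definition is_best_response :: "('x \<Rightarrow> bool) \<Rightarrow> ('x \<Rightarrow> 'x \<Rightarrow> real) \<Rightarrow> ('x \<Rightarrow> 'x) \<Rightarrow> bool" where
  "is_best_response f c \<Delta> \<longleftrightarrow>
     (\<forall>x. if f x \<or> \<not> (\<exists>x'. (\<forall>z. indiv_utility f c x z \<le> indiv_utility f c x x') \<and> f x')
          then \<Delta> x = x
          else (\<forall>z. indiv_utility f c x z \<le> indiv_utility f c x (\<Delta> x)) \<and> f (\<Delta> x))"

definition threshold_clf :: "('x \<Rightarrow> real) \<Rightarrow> real \<Rightarrow> 'x \<Rightarrow> bool" where
  "threshold_clf l \<tau> x \<longleftrightarrow> l x \<ge> \<tau>"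

text \<open>Pr[f(Delta X) = Y]\<close>
definition inst_utility :: "'x measure \<Rightarrow> ('x \<Rightarrow> real) \<Rightarrow> ('x \<Rightarrow> bool) \<Rightarrow> ('x \<Rightarrow> 'x) \<Rightarrow> real" where
  "inst_utility \<mu> l f \<Delta> = (\<integral>x. (if f (\<Delta> x) then l x else 1 - l x) \<partial>\<mu>)"

definition min_cost :: "('x \<Rightarrow> 'x \<Rightarrow> real) \<Rightarrow> ('x \<Rightarrow> bool) \<Rightarrow> 'x \<Rightarrow> real" where
  "min_cost c f x = Inf {c x x' | x'. f x'}"

text \<open>E[min_{f x' = 1} c(X,x') | Y = 1]\<close>
definition social_burden :: "'x measure \<Rightarrow> ('x \<Rightarrow> real) \<Rightarrow> ('x \<Rightarrow> 'x \<Rightarrow> real) \<Rightarrow> ('x \<Rightarrow> bool) \<Rightarrow> real" where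
  "social_burden \<mu> l c f = (\<integral>x. l x * min_cost c f x \<partial>\<mu>) / (\<integral>x. l x \<partial>\<mu>)"

end

theory Submission
  imports Defs
begin

text \<open>A best response to a classifier f ends up accepted exactly when the cheapest accepted
point costs at most the gain 1, so the strategic utility of f only depends on the minimal
costs m_f. For thresholds these are monotone: raising the threshold raises every m_f, and
by outcome monotonicity m_f decreases in the likelihood, so the accepted region is an upper
set of l. If \<tau> \<le> 1/2, the points accepted under \<tau> but not under 1/2 have likelihood below
1/2 and are better rejected, so U(\<tau>) \<le> U(1/2). Hence \<tau> > 1/2, all minimal costs grow, and
the burden can only stay equal if m_\<tau> = m_{1/2} almost everywhere, which would force
U(\<tau>) = U(1/2).\<close>

definition min_cost_attained :: "('x \<Rightarrow> 'x \<Rightarrow> real) \<Rightarrow> ('x \<Rightarrow> bool) \<Rightarrow> bool" where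
  "min_cost_attained c f \<longleftrightarrow> (\<forall>x. \<exists>x'. f x' \<and> (\<forall>z. f z \<longrightarrow> c x x' \<le> c x z))"

text \<open>Pr[f(\<Delta> X) = Y | X = x] for a best response \<Delta> to f, cf. best_response_accepted_iff.\<close>

definition strategic_accuracy :: "('x \<Rightarrow> real) \<Rightarrow> ('x \<Rightarrow> 'x \<Rightarrow> real) \<Rightarrow> ('x \<Rightarrow> bool) \<Rightarrow> 'x \<Rightarrow> real" where
  "strategic_accuracy l c f x = (if min_cost c f x \<le> 1 then l x else 1 - l x)"

lemma outcome_monotonic_cost_pos_iff:
  "outcome_monotonic l c \<Longrightarrow> 0 < c x x' \<longleftrightarrow> l x < l x'"
  unfolding outcome_monotonic_def by blast

lemma outcome_monotonic_cost_antimono: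
  assumes "outcome_monotonic l c" and "0 < c x xs" and "l x \<le> l y"
  shows "c y xs \<le> c x xs"
  using assms unfolding outcome_monotonic_def by (meson not_le not_less)

lemma outcome_monotonic_cost_self:
  assumes "outcome_monotonic l c" and "\<forall>x x'. 0 \<le> c x x'"
  shows "c x x = 0"
  using outcome_monotonic_cost_pos_iff[OF assms(1), of x x] assms(2) by (metis order_less_le)

lemma min_cost_le:
  assumes "\<forall>x x'. 0 \<le> c x x'" and "f z"
  shows "min_cost c f x \<le> c x z"
  unfolding min_cost_def
  by (rule cInf_lower) (use assms in \<open>auto intro!: bdd_belowI[where m=0]\<close>)

lemma min_cost_nonneg:
  assumes "\<forall>x x'. 0 \<le> c x x'" and "\<exists>z. f z"
  shows "0 \<le> min_cost c f x"
  unfolding min_cost_def by (rule cInf_greatest) (use assms in auto)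

lemma min_cost_eq_minimum:
  assumes "f xs" and "\<forall>z. f z \<longrightarrow> c x xs \<le> c x z"
  shows "min_cost c f x = c x xs"
  unfolding min_cost_def by (rule cInf_eq_minimum) (use assms in auto)

lemma min_cost_eq_0:
  assumes "\<forall>x x'. 0 \<le> c x x'" and "c x x = 0" and "f x"
  shows "min_cost c f x = 0"
  using min_cost_le[of c f, OF assms(1,3), of x] min_cost_nonneg[of c f x] assms by fastforce

lemma best_response_exists_accepted_iff:
  assumes "\<not> f x" and "f xs" and "\<forall>z. f z \<longrightarrow> c x xs \<le> c x z"
    and "\<forall>x x'. 0 \<le> c x x'" and "c x x = 0"
  shows "(\<exists>x'. (\<forall>z. indiv_utility f c x z \<le> indiv_utility f c x x') \<and> f x') \<longleftrightarrow> c x xs \<le> 1"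
proof
  assume "\<exists>x'. (\<forall>z. indiv_utility f c x z \<le> indiv_utility f c x x') \<and> f x'"
  then obtain x' where "indiv_utility f c x x \<le> indiv_utility f c x x'" "f x'" by blast
  with assms show "c x xs \<le> 1" unfolding indiv_utility_def by force
next
  assume "c x xs \<le> 1"
  have "indiv_utility f c x z \<le> indiv_utility f c x xs" for z
  proof (cases "f z")
    case True
    then show ?thesis using assms(2,3) by (simp add: indiv_utility_def)
  next
    case False
    have "0 \<le> c x z" using assms(4) by blast
    with False \<open>c x xs \<le> 1\<close> \<open>f xs\<close> show ?thesis by (simp add: indiv_utility_def)
  qed
  with \<open>f xs\<close> show "\<exists>x'. (\<forall>z. indiv_utility f c x z \<le> indiv_utility f c x x') \<and> f x'" by blast
qed

lemma best_response_accepted_iff: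
  assumes "\<forall>x x'. 0 \<le> c x x'" and "\<And>x. c x x = 0"
    and "min_cost_attained c f" and "is_best_response f c \<Delta>"
  shows "f (\<Delta> x) \<longleftrightarrow> min_cost c f x \<le> 1"
proof -
  obtain xs where xs: "f xs" "\<forall>z. f z \<longrightarrow> c x xs \<le> c x z"
    using assms(3) unfolding min_cost_attained_def by blast
  have "if f x \<or> \<not> (\<exists>x'. (\<forall>z. indiv_utility f c x z \<le> indiv_utility f c x x') \<and> f x')
          then \<Delta> x = x else f (\<Delta> x)"
    using assms(4) unfolding is_best_response_def by presburger
  then show ?thesis
    using best_response_exists_accepted_iff[OF _ xs assms(1)] min_cost_eq_minimum[of f xs c, OF xs]
      min_cost_eq_0[of c, OF assms(1)] assms(2)
    by (cases "f x") (auto split: if_splits)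
qed

lemma inst_utility_best_response:
  assumes "\<forall>x x'. 0 \<le> c x x'" and "\<And>x. c x x = 0"
    and "min_cost_attained c f" and "is_best_response f c \<Delta>"
  shows "inst_utility \<mu> l f \<Delta> = (\<integral>x. strategic_accuracy l c f x \<partial>\<mu>)"
  unfolding inst_utility_def strategic_accuracy_def
  using best_response_accepted_iff[OF assms] by simp

lemma min_cost_threshold_mono:
  assumes "\<forall>x x'. 0 \<le> c x x'" and "min_cost_attained c (threshold_clf l t')" and "t \<le> t'"
  shows "min_cost c (threshold_clf l t) x \<le> min_cost c (threshold_clf l t') x"
proof -
  obtain xs where xs: "threshold_clf l t' xs" "\<forall>z. threshold_clf l t' z \<longrightarrow> c x xs \<le> c x z"
    using assms(2) unfolding min_cost_attained_def by blast
  have "threshold_clf l t xs" using xs(1) assms(3) unfolding threshold_clf_def by simp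
  then show ?thesis
    using min_cost_le[of c _ xs x, OF assms(1)] min_cost_eq_minimum[of "threshold_clf l t'" xs c, OF xs]
    by simp
qed

lemma min_cost_threshold_antimono:
  assumes mono: "outcome_monotonic l c" and nn: "\<forall>x x'. 0 \<le> c x x'"
    and att: "min_cost_attained c (threshold_clf l t)" and "l x \<le> l y"
  shows "min_cost c (threshold_clf l t) y \<le> min_cost c (threshold_clf l t) x"
proof (cases "threshold_clf l t y")
  case True
  have "\<exists>z. threshold_clf l t z" using att unfolding min_cost_attained_def by blast
  then show ?thesis
    using min_cost_eq_0[of c y "threshold_clf l t", OF nn outcome_monotonic_cost_self[OF mono nn] True]
      min_cost_nonneg[of c "threshold_clf l t" x, OF nn] by simp
next
  case False
  obtain xs where xs: "threshold_clf l t xs" "\<forall>z. threshold_clf l t z \<longrightarrow> c x xs \<le> c x z"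
    using att unfolding min_cost_attained_def by blast
  have "l x < l xs" using xs(1) False \<open>l x \<le> l y\<close> unfolding threshold_clf_def by simp
  then have "c y xs \<le> c x xs"
    by (intro outcome_monotonic_cost_antimono[OF mono _ \<open>l x \<le> l y\<close>])
      (simp add: outcome_monotonic_cost_pos_iff[OF mono])
  then show ?thesis
    using min_cost_le[of c "threshold_clf l t" xs y, OF nn xs(1)]
      min_cost_eq_minimum[of "threshold_clf l t" xs c, OF xs] by simp
qed

lemma strategic_accuracy_threshold_mono_below_half:
  assumes nn: "\<forall>x x'. 0 \<le> c x x'" and "c x x = 0"
    and att: "min_cost_attained c (threshold_clf l t')" and "t \<le> t'" and "t' \<le> 1/2"
  shows "strategic_accuracy l c (threshold_clf l t) x \<le> strategic_accuracy l c (threshold_clf l t') x"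
proof -
  have "min_cost c (threshold_clf l t') x \<le> 1 \<Longrightarrow> min_cost c (threshold_clf l t) x \<le> 1"
    using min_cost_threshold_mono[of c, OF nn att \<open>t \<le> t'\<close>, of x] by simp
  moreover have "threshold_clf l t' x \<Longrightarrow> min_cost c (threshold_clf l t') x \<le> 1"
    using min_cost_eq_0[of c x "threshold_clf l t'", OF nn \<open>c x x = 0\<close>] by simp
  then have "\<not> min_cost c (threshold_clf l t') x \<le> 1 \<Longrightarrow> l x < 1/2"
    using \<open>t' \<le> 1/2\<close> unfolding threshold_clf_def by linarith
  ultimately show ?thesis unfolding strategic_accuracy_def by auto
qed

lemma measurable_upward_closed_pred:
  fixes l :: "'x \<Rightarrow> real"
  assumes l: "l \<in> borel_measurable M" and up: "\<And>x y. P x \<Longrightarrow> l x \<le> l y \<Longrightarrow> P y"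
  shows "Measurable.pred M P"
proof -
  \<comment> \<open>P is the preimage under l of an upward closed set, whose indicator h is monotone.\<close>
  define h :: "real \<Rightarrow> real" where "h r = (if \<exists>a. P a \<and> l a \<le> r then 1 else 0)" for r
  have "mono h"
  proof (rule monoI)
    fix r s :: real
    assume "r \<le> s"
    then have "(\<exists>a. P a \<and> l a \<le> r) \<Longrightarrow> (\<exists>a. P a \<and> l a \<le> s)" by (meson order_trans)
    then show "h r \<le> h s" unfolding h_def by simp
  qed
  then have "(\<lambda>x. h (l x)) \<in> borel_measurable M"
    using measurable_compose[OF l borel_measurable_mono] by blast
  then have "Measurable.pred M (\<lambda>x. 1 \<le> h (l x))"
    by (rule pred_const_le) simp
  moreover have "1 \<le> h (l x) \<longleftrightarrow> P x" for x
  proof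
    assume "1 \<le> h (l x)"
    then obtain a where "P a" "l a \<le> l x" unfolding h_def by (auto split: if_splits)
    then show "P x" by (rule up)
  next
    assume "P x"
    then show "1 \<le> h (l x)" unfolding h_def by auto
  qed
  ultimately show ?thesis by simp
qed

lemma AE_eq_if_integral_eq:
  fixes f g :: "'a \<Rightarrow> real"
  assumes "integrable M f" and "integrable M g" and "\<And>x. f x \<le> g x"
    and "integral\<^sup>L M f = integral\<^sup>L M g"
  shows "AE x in M. f x = g x"
proof -
  have "integral\<^sup>L M (\<lambda>x. g x - f x) = 0" using assms by simp
  then have "AE x in M. g x - f x = 0"
    using integral_nonneg_eq_0_iff_AE[of M "\<lambda>x. g x - f x"] assms by simp
  then show ?thesis by auto
qed

lemma AE_strategic_accuracy_eq_if_burden_integral_eq: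
  assumes l_pos: "\<forall>x. 0 < l x" and le: "\<And>x. min_cost c f x \<le> min_cost c g x"
    and "integrable M (\<lambda>x. l x * min_cost c f x)" and "integrable M (\<lambda>x. l x * min_cost c g x)"
    and "(\<integral>x. l x * min_cost c f x \<partial>M) = (\<integral>x. l x * min_cost c g x \<partial>M)"
  shows "AE x in M. strategic_accuracy l c f x = strategic_accuracy l c g x"
proof -
  have "l x * min_cost c f x \<le> l x * min_cost c g x" for x
    using le[of x] l_pos by (simp add: mult_left_mono less_imp_le)
  then have "AE x in M. l x * min_cost c f x = l x * min_cost c g x"
    using AE_eq_if_integral_eq[OF assms(3,4)] assms(5) by blast
  moreover have "l x \<noteq> 0" for x
    using l_pos[rule_format, of x] by simp
  ultimately have "AE x in M. min_cost c f x = min_cost c g x"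
    by (auto elim!: AE_mp intro!: AE_I2)
  then show ?thesis by eventually_elim (simp add: strategic_accuracy_def)
qed

locale strategic_classification = prob_space M for M :: "'x measure" +
  fixes l :: "'x \<Rightarrow> real" and c :: "'x \<Rightarrow> 'x \<Rightarrow> real"
  assumes l_measurable: "l \<in> borel_measurable M"
    and l_pos: "\<forall>x. 0 < l x \<and> l x \<le> 1"
    and c_nonneg: "\<forall>x x'. 0 \<le> c x x'"
    and outcome_monotonic: "outcome_monotonic l c"
begin

lemma cost_self: "c x x = 0"
  using outcome_monotonic_cost_self[OF outcome_monotonic c_nonneg] .

lemma integrable_strategic_accuracy_threshold:
  assumes att: "min_cost_attained c (threshold_clf l t)"
  shows "integrable M (strategic_accuracy l c (threshold_clf l t))"
proof -
  have "Measurable.pred M (\<lambda>x. min_cost c (threshold_clf l t) x \<le> 1)"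
  proof (rule measurable_upward_closed_pred[OF l_measurable])
    fix x y
    assume "min_cost c (threshold_clf l t) x \<le> 1" and "l x \<le> l y"
    then show "min_cost c (threshold_clf l t) y \<le> 1"
      using min_cost_threshold_antimono[OF outcome_monotonic c_nonneg att, of x y] by linarith
  qed
  then have "strategic_accuracy l c (threshold_clf l t) \<in> borel_measurable M"
    unfolding strategic_accuracy_def using l_measurable by measurable
  moreover have "norm (strategic_accuracy l c (threshold_clf l t) x) \<le> 1" for x
  proof -
    have "0 < l x" "l x \<le> 1" using l_pos by blast+
    then show ?thesis by (simp add: strategic_accuracy_def)
  qed
  ultimately show ?thesis
    by (intro integrable_const_bound[where B=1] AE_I2)
qed

lemma integral_strategic_accuracy_threshold_mono_below_half:
  assumes "min_cost_attained c (threshold_clf l t)" and "min_cost_attained c (threshold_clf l t')"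
    and "t \<le> t'" and "t' \<le> 1/2"
  shows "(\<integral>x. strategic_accuracy l c (threshold_clf l t) x \<partial>M)
    \<le> (\<integral>x. strategic_accuracy l c (threshold_clf l t') x \<partial>M)"
  using strategic_accuracy_threshold_mono_below_half[of c, OF c_nonneg cost_self assms(2-4)]
  by (intro integral_mono integrable_strategic_accuracy_threshold assms(1,2))

lemma burden_integral_threshold_less:
  assumes att: "min_cost_attained c (threshold_clf l t)" "min_cost_attained c (threshold_clf l t')"
    and "t \<le> t'"
    and int: "integrable M (\<lambda>x. l x * min_cost c (threshold_clf l t) x)"
      "integrable M (\<lambda>x. l x * min_cost c (threshold_clf l t') x)"
    and "(\<integral>x. strategic_accuracy l c (threshold_clf l t) x \<partial>M)
      \<noteq> (\<integral>x. strategic_accuracy l c (threshold_clf l t') x \<partial>M)"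
  shows "(\<integral>x. l x * min_cost c (threshold_clf l t) x \<partial>M)
    < (\<integral>x. l x * min_cost c (threshold_clf l t') x \<partial>M)"
proof -
  have l_gt: "\<forall>x. 0 < l x" using l_pos by blast
  have m_le: "min_cost c (threshold_clf l t) x \<le> min_cost c (threshold_clf l t') x" for x
    using min_cost_threshold_mono[of c, OF c_nonneg att(2) \<open>t \<le> t'\<close>] .
  then have "(\<integral>x. l x * min_cost c (threshold_clf l t) x \<partial>M)
      \<le> (\<integral>x. l x * min_cost c (threshold_clf l t') x \<partial>M)"
    using l_gt by (intro integral_mono int) (simp add: mult_left_mono less_imp_le)
  moreover have "(\<integral>x. l x * min_cost c (threshold_clf l t) x \<partial>M)
      \<noteq> (\<integral>x. l x * min_cost c (threshold_clf l t') x \<partial>M)"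
  proof
    assume "(\<integral>x. l x * min_cost c (threshold_clf l t) x \<partial>M)
      = (\<integral>x. l x * min_cost c (threshold_clf l t') x \<partial>M)"
    then have "AE x in M. strategic_accuracy l c (threshold_clf l t) x
        = strategic_accuracy l c (threshold_clf l t') x"
      by (rule AE_strategic_accuracy_eq_if_burden_integral_eq[OF l_gt m_le int])
    then have "(\<integral>x. strategic_accuracy l c (threshold_clf l t) x \<partial>M)
        = (\<integral>x. strategic_accuracy l c (threshold_clf l t') x \<partial>M)"
      using integrable_strategic_accuracy_threshold[OF att(1)]
        integrable_strategic_accuracy_threshold[OF att(2)]
      by (intro integral_cong_AE) auto
    with assms(6) show False by contradiction
  qed
  ultimately show ?thesis by linarith
qed

lemma social_burden_less:
  assumes "(\<integral>x. l x * min_cost c f x \<partial>M) < (\<integral>x. l x * min_cost c g x \<partial>M)"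
  shows "social_burden M l c f < social_burden M l c g"
proof -
  have "norm (l x) \<le> 1" for x
  proof -
    have "0 < l x" "l x \<le> 1" using l_pos by blast+
    then show ?thesis by simp
  qed
  then have "integrable M l"
    by (intro integrable_const_bound[where B=1] AE_I2 l_measurable)
  then have "0 < integral\<^sup>L M l"
    using integral_less_AE_space[of "\<lambda>_. 0" l] l_pos by (simp add: emeasure_space_1)
  then show ?thesis
    using assms unfolding social_burden_def by (simp add: divide_strict_right_mono)
qed

end

theorem corollary1:
  fixes \<mu> :: "'x measure" and l :: "'x \<Rightarrow> real" and c :: "'x \<Rightarrow> 'x \<Rightarrow> real"
    and \<tau> :: real and \<Delta> \<Delta>0 :: "'x \<Rightarrow> 'x"
  assumes prob: "prob_space \<mu>" and space: "space \<mu> = UNIV"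
    and l_meas: "l \<in> borel_measurable \<mu>"
    and l_pos: "\<forall>x. 0 < l x \<and> l x \<le> 1"
    and c_nonneg: "\<forall>x x'. c x x' \<ge> 0"
    and mono: "outcome_monotonic l c"
    and attained: "\<forall>t \<in> {\<tau>, 1/2}. \<forall>x. \<exists>x'. threshold_clf l t x' \<and>
                      (\<forall>z. threshold_clf l t z \<longrightarrow> c x x' \<le> c x z)"
    and burden_int: "\<forall>t \<in> {\<tau>, 1/2}.
                      integrable \<mu> (\<lambda>x. l x * min_cost c (threshold_clf l t) x)"
    and tau: "\<tau> \<in> {0..1}"
    and br: "is_best_response (threshold_clf l \<tau>) c \<Delta>"
    and br0: "is_best_response (threshold_clf l (1/2)) c \<Delta>0"
    and U_gt: "inst_utility \<mu> l (threshold_clf l \<tau>) \<Delta> > inst_utility \<mu> l (threshold_clf l (1/2)) \<Delta>0"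
  shows "social_burden \<mu> l c (threshold_clf l \<tau>) > social_burden \<mu> l c (threshold_clf l (1/2))"
proof -
  interpret strategic_classification \<mu> l c
    using prob l_meas l_pos c_nonneg mono
    by (intro strategic_classification.intro strategic_classification_axioms.intro)
  have att: "min_cost_attained c (threshold_clf l \<tau>)" "min_cost_attained c (threshold_clf l (1/2))"
    using attained unfolding min_cost_attained_def by simp_all
  have U_less: "(\<integral>x. strategic_accuracy l c (threshold_clf l (1/2)) x \<partial>\<mu>)
      < (\<integral>x. strategic_accuracy l c (threshold_clf l \<tau>) x \<partial>\<mu>)"
    using U_gt inst_utility_best_response[OF c_nonneg cost_self att(1) br]
      inst_utility_best_response[OF c_nonneg cost_self att(2) br0] by simp
  have "1/2 < \<tau>"
  proof (rule ccontr)
    assume "\<not> 1/2 < \<tau>"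
    with integral_strategic_accuracy_threshold_mono_below_half[OF att] U_less show False by simp
  qed
  then have "(\<integral>x. l x * min_cost c (threshold_clf l (1/2)) x \<partial>\<mu>)
      < (\<integral>x. l x * min_cost c (threshold_clf l \<tau>) x \<partial>\<mu>)"
    using burden_integral_threshold_less[OF att(2,1)] burden_int U_less by simp
  then show ?thesis by (rule social_burden_less)
qed

end
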